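(* Let $U\subset\mathbb{R}^n$ be a domain with $\mathbb{R}^{>0}\cdot U\subset U$ and $h:U\to\mathbb{R}$ a smooth positive function, homogeneous of degree $k>1$, such that $-\partial^2h$ restricts to a positive definite metric on $\{h=1\}$. Assume that the Riemannian metric $g'=-\partial^2\log h$ on $U$ is complete, and let $c<0$. Then the Riemannian metric $g'_c=-\partial^2\log(h+c)$ on $U_c=\{x\in U\mid h(x)+c>0\}$ is complete.
   Context: $\partial^2$ denotes the real Hessian with respect to the standard linear coordinates of $\mathbb{R}^n$. (That $g'$ and $g'_c$ are Riemannian on $U$ and $U_c$ respectively is known in this setting.) *)

theory Defs
  imports "HOL-Analysis.Analysis"
begin

fun Ck_on :: "nat \<Rightarrow> ('a::euclidean_space \<Rightarrow> real) \<Rightarrow> 'a set \<Rightarrow> bool" where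
  "Ck_on 0 f S = continuous_on S f"
| "Ck_on (Suc m) f S =
     (f differentiable_on S \<and> continuous_on S f \<and>
      (\<forall>v. Ck_on m (\<lambda>x. frechet_derivative f (at x) v) S))"

definition smooth_on :: "('a::euclidean_space \<Rightarrow> real) \<Rightarrow> 'a set \<Rightarrow> bool" where
  "smooth_on f S \<longleftrightarrow> (\<forall>m. Ck_on m f S)"

definition hess :: "('a::euclidean_space \<Rightarrow> real) \<Rightarrow> 'a \<Rightarrow> 'a \<Rightarrow> 'a \<Rightarrow> real" where
  "hess f x v w = frechet_derivative (\<lambda>y. frechet_derivative f (at y) v) (at x) w"

definition curve_length :: "('a::euclidean_space \<Rightarrow> 'a \<Rightarrow> 'a \<Rightarrow> real) \<Rightarrow> (real \<Rightarrow> 'a) \<Rightarrow> real" where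
  "curve_length G \<gamma> =
     integral {0..1} (\<lambda>t. sqrt (G (\<gamma> t) (vector_derivative \<gamma> (at t)) (vector_derivative \<gamma> (at t))))"

text \<open>Riemannian distance on U (extended real, infinite if x and y cannot be joined): infimum of lengths of C^1 curves in U joining x and y.\<close>
definition riem_dist :: "'a::euclidean_space set \<Rightarrow> ('a \<Rightarrow> 'a \<Rightarrow> 'a \<Rightarrow> real) \<Rightarrow> 'a \<Rightarrow> 'a \<Rightarrow> ereal" where
  "riem_dist U G x y = Inf {ereal (curve_length G \<gamma>) | \<gamma>.
      \<gamma> C1_differentiable_on {0..1} \<and> \<gamma> ` {0..1} \<subseteq> U \<and> \<gamma> 0 = x \<and> \<gamma> 1 = y}"

definition riem_complete :: "'a::euclidean_space set \<Rightarrow> ('a \<Rightarrow> 'a \<Rightarrow> 'a \<Rightarrow> real) \<Rightarrow> bool" where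
  "riem_complete U G \<longleftrightarrow>
     (\<forall>X::nat \<Rightarrow> 'a. (\<forall>m. X m \<in> U) \<and>
        (\<forall>e>0. \<exists>N. \<forall>m\<ge>N. \<forall>p\<ge>N. riem_dist U G (X m) (X p) < ereal e)
        \<longrightarrow> (\<exists>y\<in>U. (\<lambda>m. riem_dist U G (X m) y) \<longlonglongrightarrow> 0))"

end

theory Submission
  imports Defs
begin

text \<open>
  The whole argument rests on the pointwise inequality
  \<open>k h (-\<partial>\<^sup>2h)(v,v) + (k - 1) (dh v)\<^sup>2 \<ge> 0\<close>, obtained on the level set \<open>h = 1\<close> by
  splitting \<open>v\<close> into a radial part and a part tangent to the level set (on which
  \<open>-\<partial>\<^sup>2h\<close> is positive definite), using Euler's identities, and transported to all of \<open>U\<close>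
  by homogeneity. Since \<open>g'\<^sub>c(v,v) = -\<partial>\<^sup>2h(v,v)/(h+c) + (dh v)\<^sup>2/(h+c)\<^sup>2\<close>, it yields
  (i) \<open>g' \<le> g'\<^sub>c\<close> on \<open>U\<^sub>c\<close>, (ii) \<open>|d log(h+c)| \<le> \<surd>k |\<cdot>|\<^bsub>g'\<^sub>c\<^esub>\<close>, so that \<open>log(h+c)\<close> is
  \<open>\<surd>k\<close>-Lipschitz for the \<open>g'\<^sub>c\<close>-distance, and (iii) \<open>g'\<^sub>c \<le> k (h/(h+c))\<^sup>2 g'\<close>.

  A \<open>g'\<^sub>c\<close>-Cauchy sequence is \<open>g'\<close>-Cauchy by (i), hence converges in \<open>U\<close>. By (ii)
  \<open>h + c \<ge> \<delta> > 0\<close> along its tail, and by (ii) for \<open>c = 0\<close> short \<open>g'\<close>-curves starting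
  there remain in \<open>h + c \<ge> \<delta>/2\<close>, where (iii) bounds their \<open>g'\<^sub>c\<close>-length by a
  multiple of their \<open>g'\<close>-length. So the limit lies in \<open>U\<^sub>c\<close> and is also the
  \<open>g'\<^sub>c\<close>-limit.
\<close>

section \<open>Homogeneous functions\<close>

lemma homogeneous_euler:
  fixes f :: "'a::real_normed_vector \<Rightarrow> real"
  assumes hom: "\<And>t y. t > 0 \<Longrightarrow> y \<in> U \<Longrightarrow> f (t *\<^sub>R y) = t powr p * f y"
    and x: "x \<in> U" and D: "(f has_derivative D) (at x)"
  shows "D x = p * f x"
proof -
  have "((\<lambda>t. t *\<^sub>R x) has_derivative (\<lambda>s. s *\<^sub>R x)) (at 1)"
    by (auto intro!: derivative_eq_intros)
  from has_derivative_compose[OF this, of f D]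
  have "((\<lambda>t. f (t *\<^sub>R x)) has_derivative (\<lambda>s. D (s *\<^sub>R x))) (at 1)"
    using D by simp
  moreover have "(\<lambda>s. D (s *\<^sub>R x)) = (*) (D x)"
    using linear_scale[OF has_derivative_linear[OF D]] by (auto simp: fun_eq_iff)
  ultimately have "((\<lambda>t. f (t *\<^sub>R x)) has_real_derivative D x) (at 1)"
    by (simp add: has_field_derivative_def)
  moreover have "((\<lambda>t. t powr p * f x) has_real_derivative p * f x) (at 1)"
    by (auto intro!: derivative_eq_intros)
  then have "((\<lambda>t. f (t *\<^sub>R x)) has_real_derivative p * f x) (at 1)"
    by (rule has_field_derivative_transform_within_open[of _ _ _ "{0<..}"]) (auto simp: hom x)
  ultimately show ?thesis by (rule DERIV_unique)
qed

lemma homogeneous_derivative_scaleR: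
  fixes f :: "'a::real_normed_vector \<Rightarrow> real"
  assumes hom: "\<And>t y. t > 0 \<Longrightarrow> y \<in> U \<Longrightarrow> f (t *\<^sub>R y) = t powr p * f y"
    and U: "open U" and x: "x \<in> U" and t: "t > 0"
    and D: "(f has_derivative D) (at x)" and D': "(f has_derivative D') (at (t *\<^sub>R x))"
  shows "D' v = t powr (p - 1) * D v"
proof -
  have "((\<lambda>y. t *\<^sub>R y) has_derivative (\<lambda>w. t *\<^sub>R w)) (at x)"
    by (auto intro!: derivative_eq_intros)
  from has_derivative_compose[OF this D']
  have "((\<lambda>y. f (t *\<^sub>R y)) has_derivative (\<lambda>w. D' (t *\<^sub>R w))) (at x)" .
  moreover have "((\<lambda>y. t powr p * f y) has_derivative (\<lambda>w. t powr p * D w)) (at x)"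
    using D by (auto intro!: derivative_eq_intros)
  then have "((\<lambda>y. f (t *\<^sub>R y)) has_derivative (\<lambda>w. t powr p * D w)) (at x)"
    by (rule has_derivative_transform_within_open[OF _ U x]) (simp add: hom t)
  ultimately have "D' (t *\<^sub>R v) = t powr p * D v"
    by (metis has_derivative_unique)
  moreover have "t powr p = t * t powr (p - 1)"
    using t by (simp add: powr_diff)
  ultimately show ?thesis
    using t linear_scale[OF has_derivative_linear[OF D']] by simp
qed

section \<open>Inequalities for the shifted metric\<close>

text \<open>
  With \<open>H = h x\<close>, \<open>Q = -\<partial>\<^sup>2h(v,v)\<close> and \<open>a = dh v\<close>, the expression
  \<open>Q/(H + c) + a\<^sup>2/(H + c)\<^sup>2\<close> is \<open>g'\<^sub>c(v,v)\<close> (lemma \<open>g'_eq\<close>), and the hypothesis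
  \<open>k H Q + (k - 1) a\<^sup>2 \<ge> 0\<close> is lemma \<open>hess_bound\<close>.
\<close>

lemma shift_form_lower_bound:
  fixes k H c Q a :: real
  assumes k: "k > 1" and c: "c \<le> 0" and Hc: "H + c > 0" and hess: "k * H * Q + (k - 1) * a\<^sup>2 \<ge> 0"
  shows "a\<^sup>2 / (k * (H + c)\<^sup>2) \<le> Q / (H + c) + a\<^sup>2 / (H + c)\<^sup>2"
proof -
  define D where "D = H + c"
  have "k * D * Q + (k - 1) * a\<^sup>2 \<ge> 0"
  proof (cases "Q < 0")
    case True
    then have "H * Q \<le> D * Q" using c by (simp add: D_def mult_right_mono_neg)
    then have "k * (H * Q) \<le> k * (D * Q)" using k by (simp add: mult_left_mono)
    then show ?thesis using hess by (simp add: mult.assoc)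
  next
    case False
    then show ?thesis using Hc k by (simp add: D_def)
  qed
  moreover have "a\<^sup>2 / (k * D\<^sup>2) \<le> Q / D + a\<^sup>2 / D\<^sup>2 \<longleftrightarrow> a\<^sup>2 \<le> k * D * Q + k * a\<^sup>2"
    using Hc k unfolding D_def[symmetric] by (simp add: field_simps power2_eq_square)
  ultimately show ?thesis by (simp add: D_def algebra_simps)
qed

lemma shift_form_mono:
  fixes k H c Q a :: real
  assumes k: "k > 1" and c: "c < 0" and Hc: "H + c > 0" and hess: "k * H * Q + (k - 1) * a\<^sup>2 \<ge> 0"
  shows "Q / H + a\<^sup>2 / H\<^sup>2 \<le> Q / (H + c) + a\<^sup>2 / (H + c)\<^sup>2"
proof -
  define D where "D = H + c"
  have D0: "D > 0" and H0: "H > 0" and DH: "D < H" using Hc c by (auto simp: D_def)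
  have QH: "Q * H \<ge> - (a\<^sup>2)"
  proof -
    have "k * (Q * H) \<ge> - (k - 1) * a\<^sup>2"
      using hess by (simp add: algebra_simps)
    moreover have "- (k - 1) * a\<^sup>2 \<ge> k * (- (a\<^sup>2))"
      by (simp add: algebra_simps)
    ultimately have "k * (Q * H) \<ge> k * (- (a\<^sup>2))" by linarith
    then show ?thesis using k by (simp only: mult_le_cancel_left_pos)
  qed
  have "Q * H * D + a\<^sup>2 * (H + D) \<ge> 0"
  proof -
    have "Q * H * D \<ge> - (a\<^sup>2) * D" using mult_right_mono[OF QH, of D] D0 by simp
    moreover have "a\<^sup>2 * H \<ge> 0" using H0 by simp
    ultimately show ?thesis by (simp add: distrib_left)
  qed
  then have "0 \<le> (H - D) * (Q * H * D + a\<^sup>2 * (H + D))" using DH by simp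
  also have "\<dots> = Q * H\<^sup>2 * D + a\<^sup>2 * H\<^sup>2 - (Q * H * D\<^sup>2 + a\<^sup>2 * D\<^sup>2)"
    by (simp add: algebra_simps power2_eq_square)
  finally show ?thesis
    using D0 H0 unfolding D_def[symmetric] by (simp add: field_simps power2_eq_square)
qed

lemma shift_form_le_scaled:
  fixes k H c Q a R :: real
  assumes k: "k > 1" and c: "c \<le> 0" and Hc: "H + c > 0" and hess: "k * H * Q + (k - 1) * a\<^sup>2 \<ge> 0"
    and R: "H / (H + c) \<le> R"
  shows "Q / (H + c) + a\<^sup>2 / (H + c)\<^sup>2 \<le> k * R\<^sup>2 * (Q / H + a\<^sup>2 / H\<^sup>2)"
proof -
  define r p b where "r = H / (H + c)" and "p = Q / H" and "b = a\<^sup>2 / H\<^sup>2"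
  have H0: "H > 0" using Hc c by simp
  have r1: "r \<ge> 1" using Hc c by (simp add: r_def field_simps)
  have r2: "r\<^sup>2 \<le> R\<^sup>2" using r1 R by (simp add: r_def power_mono)
  have b0: "b \<ge> 0" by (simp add: b_def)
  have bp: "b \<le> k * (p + b)"
  proof -
    have "a\<^sup>2 / H\<^sup>2 \<le> (k * H * Q + k * a\<^sup>2) / H\<^sup>2"
      using hess by (intro divide_right_mono) (simp_all add: algebra_simps)
    also have "\<dots> = k * (p + b)"
      using H0 by (simp add: p_def b_def power2_eq_square field_simps)
    finally show ?thesis by (simp add: b_def)
  qed
  have lhs: "Q / (H + c) + a\<^sup>2 / (H + c)\<^sup>2 = r * p + r\<^sup>2 * b"
    using H0 Hc by (simp add: r_def p_def b_def field_simps power2_eq_square)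
  have "r * p + r\<^sup>2 * b \<le> k * R\<^sup>2 * (p + b)"
  proof (cases "p \<ge> 0")
    case True
    have "r \<le> r\<^sup>2" using r1 by (simp add: power2_eq_square)
    then have "r * p \<le> r\<^sup>2 * p" using True by (rule mult_right_mono)
    then have "r * p + r\<^sup>2 * b \<le> r\<^sup>2 * (p + b)" by (simp add: distrib_left)
    also have "\<dots> \<le> R\<^sup>2 * (p + b)"
      using r2 b0 True by (simp add: mult_right_mono)
    also have "\<dots> \<le> R\<^sup>2 * (k * (p + b))"
      using b0 True k mult_right_mono[of 1 k "p + b"] by (intro mult_left_mono) simp_all
    finally show ?thesis by (simp add: algebra_simps)
  next
    case False
    have "r * p \<le> 0" using False r1 by (simp add: mult_nonneg_nonpos)
    moreover have "r\<^sup>2 * b \<le> R\<^sup>2 * b" using r2 b0 by (rule mult_right_mono)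
    ultimately have "r * p + r\<^sup>2 * b \<le> R\<^sup>2 * b" by linarith
    also have "\<dots> \<le> R\<^sup>2 * (k * (p + b))" using bp by (simp add: mult_left_mono)
    finally show ?thesis by (simp add: algebra_simps)
  qed
  then show ?thesis using lhs by (simp add: p_def b_def)
qed

lemma curve_length_le:
  assumes "(\<lambda>t. sqrt (G (\<gamma> t) (vector_derivative \<gamma> (at t)) (vector_derivative \<gamma> (at t)))) integrable_on {0..1}"
    and "(\<lambda>t. sqrt (G' (\<gamma> t) (vector_derivative \<gamma> (at t)) (vector_derivative \<gamma> (at t)))) integrable_on {0..1}"
    and "\<And>t. t \<in> {0..1} \<Longrightarrow>
      sqrt (G (\<gamma> t) (vector_derivative \<gamma> (at t)) (vector_derivative \<gamma> (at t)))
      \<le> K * sqrt (G' (\<gamma> t) (vector_derivative \<gamma> (at t)) (vector_derivative \<gamma> (at t)))"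
  shows "curve_length G \<gamma> \<le> K * curve_length G' \<gamma>"
  unfolding curve_length_def integral_mult_right[symmetric]
  using assms integrable_on_cmult_left[OF assms(2), of K] by (intro integral_le) auto

lemma riem_dist_lessE:
  assumes "riem_dist S G x y < ereal e"
  obtains \<gamma> where "\<gamma> C1_differentiable_on {0..1}" "\<gamma> ` {0..1} \<subseteq> S" "\<gamma> 0 = x" "\<gamma> 1 = y"
    "curve_length G \<gamma> < e"
  using assms unfolding riem_dist_def Inf_less_iff by auto

lemma riem_dist_le_curve_length:
  assumes "\<gamma> C1_differentiable_on {0..1}" "\<gamma> ` {0..1} \<subseteq> S" "\<gamma> 0 = x" "\<gamma> 1 = y"
  shows "riem_dist S G x y \<le> ereal (curve_length G \<gamma>)"
  unfolding riem_dist_def using assms by (intro Inf_lower) auto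

lemma riem_dist_mono:
  assumes "\<And>\<gamma>. \<gamma> C1_differentiable_on {0..1} \<Longrightarrow> \<gamma> ` {0..1} \<subseteq> S \<Longrightarrow>
      \<gamma> ` {0..1} \<subseteq> S' \<and> curve_length G' \<gamma> \<le> curve_length G \<gamma>"
  shows "riem_dist S' G' x y \<le> riem_dist S G x y"
  unfolding riem_dist_def
proof (rule Inf_mono)
  fix b assume "b \<in> {ereal (curve_length G \<gamma>) |\<gamma>.
    \<gamma> C1_differentiable_on {0..1} \<and> \<gamma> ` {0..1} \<subseteq> S \<and> \<gamma> 0 = x \<and> \<gamma> 1 = y}"
  then obtain \<gamma> where \<gamma>: "\<gamma> C1_differentiable_on {0..1}" "\<gamma> ` {0..1} \<subseteq> S" "\<gamma> 0 = x" "\<gamma> 1 = y"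
    and b: "b = ereal (curve_length G \<gamma>)"
    by blast
  show "\<exists>a\<in>{ereal (curve_length G' \<gamma>) |\<gamma>.
    \<gamma> C1_differentiable_on {0..1} \<and> \<gamma> ` {0..1} \<subseteq> S' \<and> \<gamma> 0 = x \<and> \<gamma> 1 = y}. a \<le> b"
    using assms[OF \<gamma>(1,2)] \<gamma> unfolding b
    by (intro bexI[of _ "ereal (curve_length G' \<gamma>)"]) auto
qed

lemma ereal_tendsto_0I:
  fixes f :: "nat \<Rightarrow> ereal"
  assumes "\<And>m. 0 \<le> f m" and "\<And>e. e > 0 \<Longrightarrow> eventually (\<lambda>m. f m < ereal e) sequentially"
  shows "f \<longlonglongrightarrow> 0"
proof (rule order_tendstoI)
  show "eventually (\<lambda>m. a < f m) sequentially" if "a < 0" for a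
    using assms(1) that by (auto intro: always_eventually less_le_trans)
  show "eventually (\<lambda>m. f m < a) sequentially" if "0 < a" for a
  proof -
    obtain z where z: "0 < z" "z < a" using dense[OF \<open>0 < a\<close>] by blast
    then obtain e where "z = ereal e" by (cases z) auto
    with z have e: "0 < e" "ereal e < a" by auto
    from assms(2)[OF e(1)] show ?thesis
      by eventually_elim (use e(2) in auto)
  qed
qed

lemma linear_eq_sum_Basis:
  fixes f :: "'a::euclidean_space \<Rightarrow> real"
  assumes "linear f"
  shows "f x = (\<Sum>b\<in>Basis. (x \<bullet> b) * f b)"
proof -
  have "f x = f (\<Sum>b\<in>Basis. (x \<bullet> b) *\<^sub>R b)" by (simp add: euclidean_representation)
  also have "\<dots> = (\<Sum>b\<in>Basis. (x \<bullet> b) * f b)" using assms by (simp add: linear_sum linear_scale)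
  finally show ?thesis .
qed

locale homogeneous_cone_function =
  fixes U :: "'a::euclidean_space set" and h :: "'a \<Rightarrow> real" and k :: real
  assumes open_U: "open U"
    and cone_U: "\<And>t x. t > 0 \<Longrightarrow> x \<in> U \<Longrightarrow> t *\<^sub>R x \<in> U"
    and smooth_h: "smooth_on h U"
    and h_pos: "\<And>x. x \<in> U \<Longrightarrow> h x > 0"
    and k_gt_1: "k > 1"
    and h_homogeneous: "\<And>t x. t > 0 \<Longrightarrow> x \<in> U \<Longrightarrow> h (t *\<^sub>R x) = t powr k * h x"
    and hess_neg_def: "\<And>x v. x \<in> U \<Longrightarrow> h x = 1 \<Longrightarrow> v \<noteq> 0 \<Longrightarrow>
                   frechet_derivative h (at x) v = 0 \<Longrightarrow> - hess h x v v > 0"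
begin

abbreviation Dh :: "'a \<Rightarrow> 'a \<Rightarrow> real" where
  "Dh x \<equiv> frechet_derivative h (at x)"

lemma C2_h:
  "h differentiable_on U" "continuous_on U h"
  "\<And>v. (\<lambda>x. Dh x v) differentiable_on U" "\<And>v. continuous_on U (\<lambda>x. Dh x v)"
  "\<And>v w. continuous_on U (\<lambda>x. hess h x v w)"
proof -
  have "Ck_on 2 h U" using smooth_h smooth_on_def by blast
  then show "h differentiable_on U" "continuous_on U h"
    "\<And>v. (\<lambda>x. Dh x v) differentiable_on U" "\<And>v. continuous_on U (\<lambda>x. Dh x v)"
    "\<And>v w. continuous_on U (\<lambda>x. hess h x v w)"
    by (simp_all add: numeral_2_eq_2 hess_def)
qed

lemma h_has_derivative: "x \<in> U \<Longrightarrow> (h has_derivative Dh x) (at x)"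
  using C2_h(1) open_U differentiable_on_eq_differentiable_at frechet_derivative_works by blast

lemma Dh_has_derivative:
  assumes x: "x \<in> U" shows "((\<lambda>y. Dh y v) has_derivative hess h x v) (at x)"
proof -
  have "(\<lambda>y. Dh y v) differentiable at x"
    using C2_h(3) open_U x differentiable_on_eq_differentiable_at by blast
  then show ?thesis
    unfolding frechet_derivative_works by (simp add: hess_def[abs_def])
qed

lemma linear_Dh: "x \<in> U \<Longrightarrow> linear (Dh x)"
  using h_has_derivative has_derivative_linear by blast

lemma linear_hess_right: "x \<in> U \<Longrightarrow> linear (hess h x v)"
  using Dh_has_derivative has_derivative_linear by blast

lemma linear_hess_left:
  assumes x: "x \<in> U" shows "linear (\<lambda>v. hess h x v w)"
proof -
  have "hess h x (a *\<^sub>R v + v') w = a * hess h x v w + hess h x v' w" for a v v'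
  proof -
    have "((\<lambda>y. a * Dh y v + Dh y v') has_derivative (\<lambda>w. a * hess h x v w + hess h x v' w)) (at x)"
      using x by (auto intro!: derivative_eq_intros Dh_has_derivative)
    then have "((\<lambda>y. Dh y (a *\<^sub>R v + v')) has_derivative (\<lambda>w. a * hess h x v w + hess h x v' w)) (at x)"
      by (rule has_derivative_transform_within_open[OF _ open_U x])
        (simp add: linear_add linear_scale linear_Dh)
    from fun_cong[OF frechet_derivative_at[OF this], of w] show ?thesis
      by (simp add: hess_def)
  qed
  from this[of 1] this[of _ _ 0] this[of 1 0 0] show ?thesis
    by (intro linearI) simp_all
qed

lemma Dh_eq_sum_Basis: "x \<in> U \<Longrightarrow> Dh x v = (\<Sum>i\<in>Basis. (v \<bullet> i) * Dh x i)"
  using linear_Dh linear_eq_sum_Basis by blast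

lemma hess_eq_sum_Basis:
  assumes x: "x \<in> U"
  shows "hess h x v w = (\<Sum>i\<in>Basis. \<Sum>j\<in>Basis. (v \<bullet> i) * (w \<bullet> j) * hess h x i j)"
proof -
  have "hess h x v w = (\<Sum>i\<in>Basis. (v \<bullet> i) * hess h x i w)"
    using linear_eq_sum_Basis[OF linear_hess_left[OF x]] by blast
  also have "\<dots> = (\<Sum>i\<in>Basis. (v \<bullet> i) * (\<Sum>j\<in>Basis. (w \<bullet> j) * hess h x i j))"
    using linear_eq_sum_Basis[OF linear_hess_right[OF x]] by metis
  finally show ?thesis by (simp add: sum_distrib_left mult.assoc)
qed

lemma Dh_homogeneous:
  assumes t: "t > 0" and x: "x \<in> U"
  shows "Dh (t *\<^sub>R x) v = t powr (k - 1) * Dh x v"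
  by (rule homogeneous_derivative_scaleR[OF h_homogeneous open_U x t
        h_has_derivative[OF x] h_has_derivative[OF cone_U[OF t x]]])

lemma Dh_self: "x \<in> U \<Longrightarrow> Dh x x = k * h x"
  by (rule homogeneous_euler[OF h_homogeneous _ h_has_derivative])

lemma hess_homogeneous:
  assumes t: "t > 0" and x: "x \<in> U"
  shows "hess h (t *\<^sub>R x) v w = t powr (k - 2) * hess h x v w"
  using homogeneous_derivative_scaleR[of U "\<lambda>y. Dh y v", OF Dh_homogeneous open_U x t
      Dh_has_derivative[OF x] Dh_has_derivative[OF cone_U[OF t x]]]
  by simp

lemma hess_self_right: "x \<in> U \<Longrightarrow> hess h x v x = (k - 1) * Dh x v"
  by (rule homogeneous_euler[of U "\<lambda>y. Dh y v", OF Dh_homogeneous _ Dh_has_derivative])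

lemma hess_self_left:
  assumes x: "x \<in> U" shows "hess h x x w = (k - 1) * Dh x w"
proof -
  have sum: "((\<lambda>y. \<Sum>b\<in>Basis. (y \<bullet> b) * Dh y b) has_derivative
      (\<lambda>w. \<Sum>b\<in>Basis. (x \<bullet> b) * hess h x b w + (w \<bullet> b) * Dh x b)) (at x)"
    using x by (auto intro!: derivative_eq_intros Dh_has_derivative)
  have "((\<lambda>y. k * h y) has_derivative (\<lambda>w. k * Dh x w)) (at x)"
    using h_has_derivative[OF x] by (auto intro!: derivative_eq_intros)
  then have euler: "((\<lambda>y. \<Sum>b\<in>Basis. (y \<bullet> b) * Dh y b) has_derivative (\<lambda>w. k * Dh x w)) (at x)"
    by (rule has_derivative_transform_within_open[OF _ open_U x])
      (simp add: Dh_self Dh_eq_sum_Basis[symmetric])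
  have "(\<Sum>b\<in>Basis. (x \<bullet> b) * hess h x b w + (w \<bullet> b) * Dh x b) = k * Dh x w"
    using fun_cong[OF has_derivative_unique[OF sum euler], of w] by simp
  moreover have "(\<Sum>b\<in>Basis. (x \<bullet> b) * hess h x b w + (w \<bullet> b) * Dh x b) = hess h x x w + Dh x w"
    using linear_eq_sum_Basis[OF linear_hess_left[OF x], of x] Dh_eq_sum_Basis[OF x, of w]
    by (simp add: sum.distrib)
  ultimately show ?thesis by (simp add: algebra_simps)
qed

lemma hess_bound_level_one:
  assumes x: "x \<in> U" and hx: "h x = 1"
  shows "k * (- hess h x v v) + (k - 1) * (Dh x v)\<^sup>2 \<ge> 0"
proof -
  \<comment> \<open>Split \<open>v\<close> into a radial part and a part \<open>\<tau>\<close> tangent to the level set.\<close>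
  define a where "a = Dh x v / k"
  define \<tau> where "\<tau> = v - a *\<^sub>R x"
  have k0: "k > 0" using k_gt_1 by simp
  have v: "v = a *\<^sub>R x + \<tau>" by (simp add: \<tau>_def)
  have D\<tau>: "Dh x \<tau> = 0"
    using Dh_self[OF x] hx k0
    by (simp add: \<tau>_def a_def linear_diff[OF linear_Dh[OF x]] linear_scale[OF linear_Dh[OF x]])
  have "hess h x (a *\<^sub>R x + \<tau>) v = a * hess h x x v + hess h x \<tau> v"
    by (simp add: linear_add[OF linear_hess_left[OF x]] linear_scale[OF linear_hess_left[OF x]])
  then have split_left: "hess h x v v = a * hess h x x v + hess h x \<tau> v"
    unfolding v[symmetric] .
  have "hess h x \<tau> (a *\<^sub>R x + \<tau>) = a * hess h x \<tau> x + hess h x \<tau> \<tau>"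
    by (simp add: linear_add[OF linear_hess_right[OF x]] linear_scale[OF linear_hess_right[OF x]])
  then have split_right: "hess h x \<tau> v = a * hess h x \<tau> x + hess h x \<tau> \<tau>"
    unfolding v[symmetric] .
  have "hess h x v v = (k - 1) * (Dh x v)\<^sup>2 / k + hess h x \<tau> \<tau>"
    using split_left split_right hess_self_right[OF x, of \<tau>] D\<tau> hess_self_left[OF x, of v]
    by (simp add: a_def power2_eq_square)
  then have "k * (- hess h x v v) + (k - 1) * (Dh x v)\<^sup>2 = k * (- hess h x \<tau> \<tau>)"
    using k0 by (simp add: field_simps)
  moreover have "- hess h x \<tau> \<tau> \<ge> 0"
    using hess_neg_def[OF x hx _ D\<tau>] linear_0[OF linear_hess_right[OF x]]
    by (cases "\<tau> = 0") (auto simp: less_imp_le)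
  ultimately show ?thesis using k0 by (simp add: mult_nonneg_nonpos)
qed

lemma hess_bound:
  assumes x: "x \<in> U"
  shows "k * h x * (- hess h x v v) + (k - 1) * (Dh x v)\<^sup>2 \<ge> 0"
proof -
  define s where "s = h x powr (1 / k)"
  have s0: "s > 0" using h_pos[OF x] by (simp add: s_def)
  define x1 where "x1 = (1 / s) *\<^sub>R x"
  have x1: "x1 \<in> U" using cone_U s0 x by (simp add: x1_def)
  have xx: "x = s *\<^sub>R x1" using s0 by (simp add: x1_def)
  have sk: "s powr k = h x" using h_pos[OF x] k_gt_1 by (simp add: s_def powr_powr)
  have hx1: "h x1 = 1"
    using h_homogeneous[OF s0 x1] h_pos[OF x] by (simp add: sk flip: xx)
  have "hess h x v v = s powr (k - 2) * hess h x1 v v"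
    using hess_homogeneous[OF s0 x1] by (simp flip: xx)
  moreover have "Dh x v = s powr (k - 1) * Dh x1 v"
    using Dh_homogeneous[OF s0 x1] by (simp flip: xx)
  ultimately have "k * h x * (- hess h x v v) + (k - 1) * (Dh x v)\<^sup>2
      = k * (s powr k * s powr (k - 2)) * (- hess h x1 v v) + (k - 1) * ((s powr (k - 1))\<^sup>2 * (Dh x1 v)\<^sup>2)"
    by (simp only: sk power_mult_distrib mult_ac)
  also have "\<dots> = s powr (2 * k - 2) * (k * (- hess h x1 v v) + (k - 1) * (Dh x1 v)\<^sup>2)"
    by (simp add: power2_eq_square algebra_simps flip: powr_add)
  also have "\<dots> \<ge> 0"
    using hess_bound_level_one[OF x1 hx1] s0 by simp
  finally show ?thesis .
qed

section \<open>The metrics \<open>g'\<^sub>c\<close>\<close>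

abbreviation Uc :: "real \<Rightarrow> 'a set" where
  "Uc c \<equiv> {x \<in> U. h x + c > 0}"

abbreviation g' :: "real \<Rightarrow> 'a \<Rightarrow> 'a \<Rightarrow> 'a \<Rightarrow> real" where
  "g' c \<equiv> \<lambda>x v w. - hess (\<lambda>y. ln (h y + c)) x v w"

lemma Uc_0: "Uc 0 = U"
  using h_pos by auto

lemma open_Uc: "open (Uc c)"
proof -
  have "open (U \<inter> h -` {- c<..})"
    using continuous_open_preimage[OF C2_h(2) open_U open_greaterThan] .
  moreover have "U \<inter> h -` {- c<..} = Uc c" by auto
  ultimately show ?thesis by simp
qed

lemma ln_shift_has_derivative:
  assumes "x \<in> Uc c"
  shows "((\<lambda>y. ln (h y + c)) has_derivative (\<lambda>v. Dh x v / (h x + c))) (at x)"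
  using assms h_has_derivative[of x]
  by (auto intro!: derivative_eq_intros simp: divide_inverse mult.commute)

lemma hess_ln_shift:
  assumes x: "x \<in> Uc c"
  shows "hess (\<lambda>y. ln (h y + c)) x v w = hess h x v w / (h x + c) - Dh x v * Dh x w / (h x + c)\<^sup>2"
proof -
  have "((\<lambda>y. h y + c) has_derivative Dh x) (at x)"
    using x h_has_derivative by (auto intro!: derivative_eq_intros)
  from has_derivative_divide[OF Dh_has_derivative this] x
  have "((\<lambda>y. Dh y v / (h y + c)) has_derivative
      (\<lambda>w. - Dh x v * (inverse (h x + c) * Dh x w * inverse (h x + c)) + hess h x v w / (h x + c))) (at x)"
    by simp
  moreover have "(\<lambda>w. - Dh x v * (inverse (h x + c) * Dh x w * inverse (h x + c)) + hess h x v w / (h x + c))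
      = (\<lambda>w. hess h x v w / (h x + c) - Dh x v * Dh x w / (h x + c)\<^sup>2)"
    by (simp add: fun_eq_iff divide_inverse power2_eq_square inverse_mult_distrib)
  ultimately have "((\<lambda>y. Dh y v / (h y + c)) has_derivative
      (\<lambda>w. hess h x v w / (h x + c) - Dh x v * Dh x w / (h x + c)\<^sup>2)) (at x)"
    by simp
  then have "((\<lambda>y. frechet_derivative (\<lambda>y. ln (h y + c)) (at y) v) has_derivative
      (\<lambda>w. hess h x v w / (h x + c) - Dh x v * Dh x w / (h x + c)\<^sup>2)) (at x)"
    by (rule has_derivative_transform_within_open[OF _ open_Uc x])
      (use fun_cong[OF frechet_derivative_at[OF ln_shift_has_derivative]] in blast)
  from fun_cong[OF frechet_derivative_at[OF this], of w] show ?thesis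
    by (simp add: hess_def)
qed

lemma g'_eq:
  "x \<in> Uc c \<Longrightarrow> g' c x v v = (- hess h x v v) / (h x + c) + (Dh x v)\<^sup>2 / (h x + c)\<^sup>2"
  by (simp add: hess_ln_shift power2_eq_square)

lemma Dh_le_sqrt_g':
  assumes x: "x \<in> Uc c" and c: "c \<le> 0"
  shows "\<bar>Dh x v\<bar> / (h x + c) \<le> sqrt k * sqrt (g' c x v v)"
proof -
  have Hc: "h x + c > 0" using x by simp
  have "\<bar>Dh x v\<bar> / (h x + c) = sqrt k * sqrt ((Dh x v)\<^sup>2 / (k * (h x + c)\<^sup>2))"
    using Hc k_gt_1 by (simp add: real_sqrt_divide real_sqrt_mult)
  also have "\<dots> \<le> sqrt k * sqrt (g' c x v v)"
    unfolding g'_eq[OF x] using x c k_gt_1 hess_bound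
    by (intro mult_left_mono real_sqrt_le_mono shift_form_lower_bound) auto
  finally show ?thesis .
qed

lemma g'_nonneg:
  assumes "x \<in> Uc c" and "c \<le> 0"
  shows "0 \<le> g' c x v v"
proof -
  have "0 \<le> (Dh x v)\<^sup>2 / (k * (h x + c)\<^sup>2)" using k_gt_1 by simp
  also have "\<dots> \<le> g' c x v v"
    unfolding g'_eq[OF assms(1)] using assms k_gt_1 hess_bound
    by (intro shift_form_lower_bound) auto
  finally show ?thesis .
qed

lemma g'_0_le_g':
  assumes "x \<in> Uc c" and "c < 0"
  shows "g' 0 x v v \<le> g' c x v v"
  using g'_eq[OF assms(1)] g'_eq[of x 0] assms k_gt_1 hess_bound
    shift_form_mono[of k c "h x" "- hess h x v v" "Dh x v"] by auto

lemma g'_le_g'_0: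
  assumes x: "x \<in> U" and \<delta>: "\<delta> > 0" "h x + c \<ge> \<delta>" and c: "c \<le> 0"
  shows "sqrt (g' c x v v) \<le> sqrt k * (1 - c / \<delta>) * sqrt (g' 0 x v v)"
proof -
  have xc: "x \<in> Uc c" and x0: "x \<in> Uc 0" using x \<delta> h_pos by auto
  have R0: "1 - c / \<delta> \<ge> 0" using \<delta> c by (simp add: divide_nonpos_pos)
  have "(- c) / (h x + c) \<le> (- c) / \<delta>" using \<delta> c by (intro frac_le) auto
  moreover have "h x / (h x + c) = 1 + (- c) / (h x + c)" using xc by (simp add: field_simps)
  ultimately have "h x / (h x + c) \<le> 1 - c / \<delta>" by simp
  from shift_form_le_scaled[OF k_gt_1 c _ hess_bound[OF x] this]
  have "g' c x v v \<le> k * (1 - c / \<delta>)\<^sup>2 * g' 0 x v v"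
    unfolding g'_eq[OF xc] g'_eq[OF x0] using xc by simp
  then have "sqrt (g' c x v v) \<le> sqrt (k * (1 - c / \<delta>)\<^sup>2 * g' 0 x v v)"
    by (rule real_sqrt_le_mono)
  also have "\<dots> = sqrt k * (1 - c / \<delta>) * sqrt (g' 0 x v v)"
    by (simp only: real_sqrt_mult real_sqrt_abs abs_of_nonneg[OF R0])
  finally show ?thesis .
qed

lemma g'_continuous_along:
  assumes \<gamma>: "\<gamma> C1_differentiable_on {0..1}" and im: "\<gamma> ` {0..1} \<subseteq> Uc c"
  shows "continuous_on {0..1}
    (\<lambda>t. g' c (\<gamma> t) (vector_derivative \<gamma> (at t)) (vector_derivative \<gamma> (at t)))"
proof -
  let ?d = "\<lambda>t. vector_derivative \<gamma> (at t)"
  have imU: "\<gamma> ` {0..1} \<subseteq> U" using im by auto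
  have cont_\<gamma>: "continuous_on {0..1} \<gamma>" and cont_d: "continuous_on {0..1} ?d"
    using \<gamma> C1_differentiable_imp_continuous_on C1_differentiable_on_eq by blast+
  have "continuous_on {0..1} (\<lambda>t.
      - (\<Sum>i\<in>Basis. \<Sum>j\<in>Basis. (?d t \<bullet> i) * (?d t \<bullet> j) * hess h (\<gamma> t) i j) / (h (\<gamma> t) + c)
      + (\<Sum>i\<in>Basis. (?d t \<bullet> i) * Dh (\<gamma> t) i)\<^sup>2 / (h (\<gamma> t) + c)\<^sup>2)"
    using im
    by (intro continuous_intros cont_d continuous_on_compose2[OF C2_h(5) cont_\<gamma> imU]
        continuous_on_compose2[OF C2_h(4) cont_\<gamma> imU] continuous_on_compose2[OF C2_h(2) cont_\<gamma> imU])
      force+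
  then show ?thesis
    by (rule continuous_on_eq)
      (use im in \<open>auto simp: image_subset_iff g'_eq hess_eq_sum_Basis[symmetric] Dh_eq_sum_Basis[symmetric]\<close>)
qed

lemma speed_integrable:
  assumes "\<gamma> C1_differentiable_on {0..1}" "\<gamma> ` {0..1} \<subseteq> Uc c" "{a..b} \<subseteq> {0..1}"
  shows "(\<lambda>t. sqrt (g' c (\<gamma> t) (vector_derivative \<gamma> (at t)) (vector_derivative \<gamma> (at t))))
    integrable_on {a..b}"
  using assms
  by (intro integrable_continuous_interval continuous_on_subset[OF _ assms(3)] continuous_intros
      g'_continuous_along)

lemma curve_length_nonneg:
  assumes \<gamma>: "\<gamma> C1_differentiable_on {0..1}" and im: "\<gamma> ` {0..1} \<subseteq> Uc c" and c: "c \<le> 0"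
  shows "0 \<le> curve_length (g' c) \<gamma>"
  unfolding curve_length_def
  using speed_integrable[OF \<gamma> im] g'_nonneg[OF _ c] im
  by (intro integral_nonneg) (auto simp: image_subset_iff)

lemma ln_shift_along_curve:
  assumes \<gamma>: "\<gamma> C1_differentiable_on {0..1}" and im: "\<gamma> ` {0..1} \<subseteq> Uc c"
    and c: "c \<le> 0" and t: "t \<in> {0..1}"
  shows "\<bar>ln (h (\<gamma> t) + c) - ln (h (\<gamma> 0) + c)\<bar> \<le> sqrt k * curve_length (g' c) \<gamma>"
proof -
  let ?d = "\<lambda>s. vector_derivative \<gamma> (at s)"
  let ?F = "\<lambda>s. ln (h (\<gamma> s) + c)"
  let ?f = "\<lambda>s. Dh (\<gamma> s) (?d s) / (h (\<gamma> s) + c)"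
  let ?I = "\<lambda>s. sqrt k * sqrt (g' c (\<gamma> s) (?d s) (?d s))"
  have sub: "{0..t} \<subseteq> {0..1}" using t by auto
  have "(?F has_vector_derivative ?f s) (at s within {0..t})" if s: "s \<in> {0..t}" for s
  proof -
    have s1: "s \<in> {0..1}" using s sub by auto
    then have \<gamma>s: "\<gamma> s \<in> Uc c" using im by blast
    have "(\<gamma> has_derivative (\<lambda>r. r *\<^sub>R ?d s)) (at s)"
      using \<gamma> s1 vector_derivative_works unfolding C1_differentiable_on_eq has_vector_derivative_def
      by blast
    from has_derivative_compose[OF this ln_shift_has_derivative[OF \<gamma>s]]
    have "(?F has_vector_derivative ?f s) (at s)"
      using linear_scale[OF linear_Dh] \<gamma>s by (simp add: has_vector_derivative_def)
    then show ?thesis by (rule has_vector_derivative_at_within)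
  qed
  then have ftc: "(?f has_integral (?F t - ?F 0)) {0..t}"
    using t by (intro fundamental_theorem_of_calculus) auto
  have int: "?I integrable_on {a..b}" if "{a..b} \<subseteq> {0..1}" for a b
    using integrable_on_cmult_left[OF speed_integrable[OF \<gamma> im that]] by simp
  have "\<bar>?F t - ?F 0\<bar> \<le> integral {0..t} ?I"
    unfolding integral_unique[OF ftc, symmetric] real_norm_def[symmetric]
  proof (rule integral_norm_bound_integral)
    fix s assume "s \<in> {0..t}"
    then have "\<gamma> s \<in> Uc c" using sub im by blast
    then show "norm (?f s) \<le> ?I s"
      using Dh_le_sqrt_g'[OF _ c] by (simp add: abs_div)
  qed (use ftc int sub in auto)
  also have "\<dots> \<le> integral {0..1} ?I"
    using int[OF sub] int[of 0 1] g'_nonneg[OF _ c] im k_gt_1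
    by (intro integral_subset_le[OF sub]) (auto simp: image_subset_iff)
  also have "\<dots> = sqrt k * curve_length (g' c) \<gamma>"
    unfolding curve_length_def by simp
  finally show ?thesis .
qed

section \<open>Completeness\<close>

lemma riem_dist_nonneg: "c \<le> 0 \<Longrightarrow> 0 \<le> riem_dist (Uc c) (g' c) x y"
  unfolding riem_dist_def by (rule Inf_greatest) (auto intro: curve_length_nonneg)

lemma riem_dist_0_le:
  assumes c: "c < 0"
  shows "riem_dist (Uc 0) (g' 0) x y \<le> riem_dist (Uc c) (g' c) x y"
proof (rule riem_dist_mono)
  fix \<gamma> assume \<gamma>: "\<gamma> C1_differentiable_on {0..1}" and im: "\<gamma> ` {0..1} \<subseteq> Uc c"
  then have im0: "\<gamma> ` {0..1} \<subseteq> Uc 0" using h_pos by auto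
  have "curve_length (g' 0) \<gamma> \<le> 1 * curve_length (g' c) \<gamma>"
  proof (rule curve_length_le)
    fix t :: real assume "t \<in> {0..1}"
    then have "\<gamma> t \<in> Uc c" using im by blast
    then show "sqrt (g' 0 (\<gamma> t) (vector_derivative \<gamma> (at t)) (vector_derivative \<gamma> (at t)))
        \<le> 1 * sqrt (g' c (\<gamma> t) (vector_derivative \<gamma> (at t)) (vector_derivative \<gamma> (at t)))"
      using g'_0_le_g'[OF _ c] by simp
  qed (use speed_integrable[OF \<gamma> im0] speed_integrable[OF \<gamma> im] in auto)
  then show "\<gamma> ` {0..1} \<subseteq> Uc 0 \<and> curve_length (g' 0) \<gamma> \<le> curve_length (g' c) \<gamma>"
    using im0 by simp
qed

lemma cauchy_Uc_0:
  assumes c: "c < 0"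
    and cauchy: "\<forall>e>0. \<exists>N. \<forall>m\<ge>N. \<forall>p\<ge>N. riem_dist (Uc c) (g' c) (X m) (X p) < ereal e"
  shows "\<forall>e>0. \<exists>N. \<forall>m\<ge>N. \<forall>p\<ge>N. riem_dist (Uc 0) (g' 0) (X m) (X p) < ereal e"
proof (intro allI impI)
  fix e :: real assume "e > 0"
  then obtain N where N: "\<And>m p. m \<ge> N \<Longrightarrow> p \<ge> N \<Longrightarrow>
      riem_dist (Uc c) (g' c) (X m) (X p) < ereal e"
    using cauchy by meson
  have "riem_dist (Uc 0) (g' 0) (X m) (X p) < ereal e" if "m \<ge> N" "p \<ge> N" for m p
    using le_less_trans[OF riem_dist_0_le[OF c] N[OF that]] .
  then show "\<exists>N. \<forall>m\<ge>N. \<forall>p\<ge>N. riem_dist (Uc 0) (g' 0) (X m) (X p) < ereal e"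
    by blast
qed

lemma ln_shift_lower_bound:
  assumes "riem_dist (Uc c) (g' c) x y < ereal r" and c: "c \<le> 0"
  shows "ln (h x + c) - sqrt k * r < ln (h y + c)"
proof -
  obtain \<gamma> where \<gamma>: "\<gamma> C1_differentiable_on {0..1}" and im: "\<gamma> ` {0..1} \<subseteq> Uc c"
    and ends: "\<gamma> 0 = x" "\<gamma> 1 = y" and len: "curve_length (g' c) \<gamma> < r"
    using assms(1) by (rule riem_dist_lessE)
  have "\<bar>ln (h y + c) - ln (h x + c)\<bar> \<le> sqrt k * curve_length (g' c) \<gamma>"
    using ln_shift_along_curve[OF \<gamma> im c, of 1] ends by simp
  also have "\<dots> < sqrt k * r"
    using len k_gt_1 by simp
  finally show ?thesis by linarith
qed

lemma h_lower_bound_along_curve: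
  assumes \<gamma>: "\<gamma> C1_differentiable_on {0..1}" and im0: "\<gamma> ` {0..1} \<subseteq> Uc 0"
    and A: "h (\<gamma> 0) \<ge> A" "A > 0" and B: "B > 0"
    and len: "sqrt k * curve_length (g' 0) \<gamma> < ln (A / B)" and t: "t \<in> {0..1}"
  shows "h (\<gamma> t) \<ge> B"
proof -
  have "\<bar>ln (h (\<gamma> t)) - ln (h (\<gamma> 0))\<bar> \<le> sqrt k * curve_length (g' 0) \<gamma>"
    using ln_shift_along_curve[OF \<gamma> im0 _ t] by simp
  moreover have "ln (A / B) = ln A - ln B"
    using A B by (simp add: ln_div)
  moreover have "ln A \<le> ln (h (\<gamma> 0))"
    using A by simp
  ultimately have "ln B < ln (h (\<gamma> t))"
    using len by linarith
  moreover have "h (\<gamma> t) > 0"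
    using im0 t by (auto simp: image_subset_iff)
  ultimately show ?thesis
    using B by simp
qed

text \<open>
  Short \<open>g'\<close>-curves starting where \<open>h + c \<ge> \<delta>\<close> stay where \<open>h + c \<ge> \<delta>/2\<close>, and there
  \<open>g'\<^sub>c\<close> is bounded by a multiple of \<open>g'\<close>; both constants depend on \<open>\<delta>\<close> only.
\<close>

lemma riem_dist_shift_le_near:
  assumes c: "c < 0" and \<delta>: "\<delta> > 0"
  obtains \<epsilon> K where "\<epsilon> > 0" "K > 0"
    "\<And>x y \<eta>. x \<in> U \<Longrightarrow> h x + c \<ge> \<delta> \<Longrightarrow> \<eta> \<le> \<epsilon> \<Longrightarrow> riem_dist (Uc 0) (g' 0) x y < ereal \<eta> \<Longrightarrow>
       y \<in> Uc c \<and> riem_dist (Uc c) (g' c) x y < ereal (K * \<eta>)"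
proof
  have sk: "sqrt k > 0" using k_gt_1 by simp
  define \<epsilon> where "\<epsilon> = ln ((\<delta> - c) / (\<delta> / 2 - c)) / sqrt k"
  define K where "K = sqrt k * (1 - c / (\<delta> / 2))"
  show "\<epsilon> > 0"
    unfolding \<epsilon>_def using \<delta> c sk by (simp add: field_simps)
  show "K > 0"
    unfolding K_def using \<delta> c sk by (simp add: field_simps)
  fix x y \<eta>
  assume x: "x \<in> U" and hx: "h x + c \<ge> \<delta>" and \<eta>: "\<eta> \<le> \<epsilon>"
    and d: "riem_dist (Uc 0) (g' 0) x y < ereal \<eta>"
  obtain \<gamma> where \<gamma>: "\<gamma> C1_differentiable_on {0..1}" and im0: "\<gamma> ` {0..1} \<subseteq> Uc 0"
    and ends: "\<gamma> 0 = x" "\<gamma> 1 = y" and len: "curve_length (g' 0) \<gamma> < \<eta>"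
    using d by (rule riem_dist_lessE)
  have "sqrt k * curve_length (g' 0) \<gamma> < sqrt k * \<epsilon>"
    using len \<eta> sk by simp
  also have "\<dots> = ln ((\<delta> - c) / (\<delta> / 2 - c))"
    using sk by (simp add: \<epsilon>_def)
  finally have bound: "h (\<gamma> t) \<ge> \<delta> / 2 - c" if "t \<in> {0..1}" for t
    using h_lower_bound_along_curve[OF \<gamma> im0 _ _ _ _ that, where A = "\<delta> - c" and B = "\<delta> / 2 - c"]
      hx ends \<delta> c by simp
  have im: "\<gamma> ` {0..1} \<subseteq> {z \<in> U. h z + c \<ge> \<delta> / 2}"
  proof (rule image_subsetI)
    fix t :: real assume t: "t \<in> {0..1}"
    then have "\<gamma> t \<in> U" using im0 by (auto simp: image_subset_iff)
    moreover have "h (\<gamma> t) + c \<ge> \<delta> / 2" using bound[OF t] by simp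
    ultimately show "\<gamma> t \<in> {z \<in> U. h z + c \<ge> \<delta> / 2}" by simp
  qed
  then have imc: "\<gamma> ` {0..1} \<subseteq> Uc c" using \<delta> by force
  have "curve_length (g' c) \<gamma> \<le> K * curve_length (g' 0) \<gamma>"
    unfolding K_def using speed_integrable[OF \<gamma> imc] speed_integrable[OF \<gamma> im0] im \<delta> c
    by (intro curve_length_le g'_le_g'_0) (auto simp: image_subset_iff)
  also have "\<dots> < K * \<eta>"
    using len \<open>K > 0\<close> by simp
  finally have "riem_dist (Uc c) (g' c) x y < ereal (K * \<eta>)"
    using riem_dist_le_curve_length[OF \<gamma> imc ends, of "g' c"] by (simp add: le_less_trans)
  moreover have "y \<in> Uc c"
    using imc ends(2) by (auto simp: image_subset_iff)
  ultimately show "y \<in> Uc c \<and> riem_dist (Uc c) (g' c) x y < ereal (K * \<eta>)"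
    by blast
qed

lemma cauchy_bounded_below:
  assumes c: "c \<le> 0" and X: "\<And>m. X m \<in> Uc c"
    and cauchy: "\<forall>e>0. \<exists>N. \<forall>m\<ge>N. \<forall>p\<ge>N. riem_dist (Uc c) (g' c) (X m) (X p) < ereal e"
  shows "\<exists>\<delta>>0. eventually (\<lambda>m. h (X m) + c \<ge> \<delta>) sequentially"
proof -
  obtain N where "\<forall>m\<ge>N. \<forall>p\<ge>N. riem_dist (Uc c) (g' c) (X m) (X p) < ereal 1"
    using cauchy[rule_format, OF zero_less_one] by blast
  then have N: "riem_dist (Uc c) (g' c) (X N) (X m) < ereal 1" if "m \<ge> N" for m
    using that by blast
  define \<delta> where "\<delta> = exp (ln (h (X N) + c) - sqrt k)"
  have "h (X m) + c \<ge> \<delta>" if "m \<ge> N" for m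
  proof -
    have "ln (h (X N) + c) - sqrt k < ln (h (X m) + c)"
      using ln_shift_lower_bound[OF N[OF that] c] by simp
    then have "\<delta> < exp (ln (h (X m) + c))"
      unfolding \<delta>_def by (rule exp_less_mono)
    also have "\<dots> = h (X m) + c"
      using X[of m] by simp
    finally show ?thesis by simp
  qed
  then show ?thesis
    unfolding eventually_sequentially by (intro exI[of _ \<delta>]) (auto simp: \<delta>_def)
qed

lemma riem_complete_Uc:
  assumes c: "c < 0" and complete: "riem_complete (Uc 0) (g' 0)"
  shows "riem_complete (Uc c) (g' c)"
  unfolding riem_complete_def
proof (intro allI impI, elim conjE)
  fix X :: "nat \<Rightarrow> 'a"
  assume X: "\<forall>m. X m \<in> Uc c"
    and cauchy: "\<forall>e>0. \<exists>N. \<forall>m\<ge>N. \<forall>p\<ge>N. riem_dist (Uc c) (g' c) (X m) (X p) < ereal e"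
  have "\<forall>e>0. \<exists>N. \<forall>m\<ge>N. \<forall>p\<ge>N. riem_dist (Uc 0) (g' 0) (X m) (X p) < ereal e"
    using cauchy_Uc_0[OF c cauchy] .
  moreover have "\<forall>m. X m \<in> Uc 0" using X h_pos by auto
  ultimately obtain y where "y \<in> Uc 0" and lim: "(\<lambda>m. riem_dist (Uc 0) (g' 0) (X m) y) \<longlonglongrightarrow> 0"
    using complete unfolding riem_complete_def by blast
  have "\<And>m. X m \<in> Uc c" using X by blast
  from cauchy_bounded_below[OF less_imp_le[OF c] this cauchy] obtain \<delta> where "\<delta> > 0"
    and bounded_below: "eventually (\<lambda>m. h (X m) + c \<ge> \<delta>) sequentially"
    by blast
  obtain \<epsilon> K where "\<epsilon> > 0" "K > 0" and near: "\<And>x y \<eta>. x \<in> U \<Longrightarrow> h x + c \<ge> \<delta> \<Longrightarrow> \<eta> \<le> \<epsilon> \<Longrightarrow>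
      riem_dist (Uc 0) (g' 0) x y < ereal \<eta> \<Longrightarrow> y \<in> Uc c \<and> riem_dist (Uc c) (g' c) x y < ereal (K * \<eta>)"
    using riem_dist_shift_le_near[OF c \<open>\<delta> > 0\<close>] by blast
  have close: "eventually (\<lambda>m. y \<in> Uc c \<and> riem_dist (Uc c) (g' c) (X m) y < ereal (K * \<eta>)) sequentially"
    if "0 < \<eta>" "\<eta> \<le> \<epsilon>" for \<eta>
  proof -
    have "eventually (\<lambda>m. riem_dist (Uc 0) (g' 0) (X m) y < ereal \<eta>) sequentially"
      using order_tendstoD(2)[OF lim] that(1) by simp
    with bounded_below show ?thesis
    proof eventually_elim
      case (elim m)
      have "X m \<in> U" using X by simp
      from near[OF this elim(1) that(2) elim(2)] show ?case .
    qed
  qed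
  have "y \<in> Uc c"
    using eventually_happens'[OF _ close[OF \<open>\<epsilon> > 0\<close> order.refl]] by auto
  moreover have "(\<lambda>m. riem_dist (Uc c) (g' c) (X m) y) \<longlonglongrightarrow> 0"
  proof (rule ereal_tendsto_0I)
    show "0 \<le> riem_dist (Uc c) (g' c) (X m) y" for m
      using c by (simp add: riem_dist_nonneg)
    fix e :: real assume "e > 0"
    define \<eta> where "\<eta> = min \<epsilon> (e / K)"
    have "0 < \<eta>" "\<eta> \<le> \<epsilon>" "K * \<eta> \<le> e"
      using \<open>e > 0\<close> \<open>\<epsilon> > 0\<close> \<open>K > 0\<close> by (auto simp: \<eta>_def min_def field_simps)
    from close[OF this(1,2)] show "eventually (\<lambda>m. riem_dist (Uc c) (g' c) (X m) y < ereal e) sequentially"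
      by eventually_elim (use \<open>K * \<eta> \<le> e\<close> in \<open>auto intro: less_le_trans\<close>)
  qed
  ultimately show "\<exists>y\<in>Uc c. (\<lambda>m. riem_dist (Uc c) (g' c) (X m) y) \<longlonglongrightarrow> 0"
    by blast
qed

end

theorem mainTheorem17:
  fixes U :: "(real ^ 'n) set" and h :: "real ^ 'n \<Rightarrow> real" and k c :: real
  assumes U_open: "open U" and U_conn: "connected U"
    and U_cone: "\<And>t x. t > 0 \<Longrightarrow> x \<in> U \<Longrightarrow> t *\<^sub>R x \<in> U"
    and h_smooth: "smooth_on h U"
    and h_pos: "\<And>x. x \<in> U \<Longrightarrow> h x > 0"
    and k_gt: "k > 1"
    and h_hom: "\<And>t x. t > 0 \<Longrightarrow> x \<in> U \<Longrightarrow> h (t *\<^sub>R x) = t powr k * h x"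
    and h_def: "\<And>x v. x \<in> U \<Longrightarrow> h x = 1 \<Longrightarrow> v \<noteq> 0 \<Longrightarrow>
                   frechet_derivative h (at x) v = 0 \<Longrightarrow> - hess h x v v > 0"
    and g_complete: "riem_complete U (\<lambda>x v w. - hess (\<lambda>y. ln (h y)) x v w)"
    and c_neg: "c < 0"
  shows "riem_complete {x \<in> U. h x + c > 0} (\<lambda>x v w. - hess (\<lambda>y. ln (h y + c)) x v w)"
proof -
  interpret homogeneous_cone_function U h k
    using U_open U_cone h_smooth h_pos k_gt h_hom h_def by unfold_locales
  have "riem_complete (Uc 0) (g' 0)"
    using g_complete unfolding Uc_0 by simp
  then show ?thesis
    by (rule riem_complete_Uc[OF c_neg])
qed

end
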